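(* Let $b>1$, let $(p,R,I)$ be proper with $I$ non-empty, and let $k$ be the greatest divisor of $p$ coprime with $b$. If two states $(s,t)$ and $(s',t')$ of $\mathcal{C}_{R,p,I}$ are Nerode-equivalent, then $s\equiv s'\pmod k$.
   Context: $A_b=\{0,\ldots,b-1\}$; for $u=u_\ell\cdots u_0$, $\mathrm{val}(u)=\sum_i u_ib^i$. Given $p\ge1$, $R\subseteq\{0,\ldots,p-1\}$ and a finite set $I\subseteq\mathbb{N}$, the set $S=(R+p\mathbb{N})\oplus I$ ($\oplus$ = symmetric difference). The triple $(p,R,I)$ is proper if $p$ is the smallest positive integer for which there exist $R',I'$ with $R'\subseteq\{0,\ldots,p-1\}$, $I'$ finite and $S=(R'+p\mathbb{N})\oplus I'$. $\mathcal{A}_{R,p}$: states $\{0,\ldots,p-1\}$, initial $0$, final $R$, transitions $n\xrightarrow{a}(nb+a)\bmod p$. With $m=\max I$, $\mathcal{B}_I$: states $\{0,\ldots,m\}\cup\{\bot\}$, initial $0$, final $I$, transitions $i\xrightarrow{a}ib+a$ if $ib+a\le m$, $i\xrightarrow{a}\bot$ otherwise, and $\bot\xrightarrow{a}\bot$. $\mathcal{C}_{R,p,I}$ is the accessible part of the product automaton of $\mathcal{A}_{R,p}$ and $\mathcal{B}_I$: states are pairs $(s,t)$ reachable from $(0,0)$, $(s,t)\xrightarrow{a}(s',t')$ iff $s\xrightarrow{a}s'$ and $t\xrightarrow{a}t'$, and $(s,t)$ is final iff exactly one of $s\in R$, $t\in I$ holds. Two states are Nerode-equivalent if for every word $u$,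 the states reached by reading $u$ from them are both final or both non-final. *)

theory Defs
  imports Main
begin

definition periodic_set :: "nat \<Rightarrow> nat set \<Rightarrow> nat set" where
  "periodic_set p R = {r + p * j | r j. r \<in> R}"

definition symdiff :: "'a set \<Rightarrow> 'a set \<Rightarrow> 'a set" where
  "symdiff A B = (A - B) \<union> (B - A)"

definition S_set :: "nat \<Rightarrow> nat set \<Rightarrow> nat set \<Rightarrow> nat set" where
  "S_set p R I = symdiff (periodic_set p R) I"

definition proper :: "nat \<Rightarrow> nat set \<Rightarrow> nat set \<Rightarrow> bool" where
  "proper p R I \<longleftrightarrow> p \<ge> 1 \<and> R \<subseteq> {0..<p} \<and> finite I \<and>
     (\<forall>q. 0 < q \<and> q < p \<longrightarrow>
        \<not> (\<exists>R' I'. R' \<subseteq> {0..<q} \<and> finite I' \<and> S_set p R I = S_set q R' I'))"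

definition stepA :: "nat \<Rightarrow> nat \<Rightarrow> nat \<Rightarrow> nat \<Rightarrow> nat" where
  "stepA b p n a = (n * b + a) mod p"

text \<open>Automaton B_I with m = Max I; the sink state \<bottom> is represented by None.\<close>
fun stepB :: "nat \<Rightarrow> nat \<Rightarrow> nat option \<Rightarrow> nat \<Rightarrow> nat option" where
  "stepB b m (Some i) a = (if i * b + a \<le> m then Some (i * b + a) else None)"
| "stepB b m None a = None"

text \<open>Product automaton C_{R,p,I}; words are read most significant digit first.\<close>
definition stepC :: "nat \<Rightarrow> nat \<Rightarrow> nat set \<Rightarrow> nat \<times> nat option \<Rightarrow> nat \<Rightarrow> nat \<times> nat option" where
  "stepC b p I q a = (stepA b p (fst q) a, stepB b (Max I) (snd q) a)"

definition runC :: "nat \<Rightarrow> nat \<Rightarrow> nat set \<Rightarrow> nat \<times> nat option \<Rightarrow> nat list \<Rightarrow> nat \<times> nat option" where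
  "runC b p I q w = foldl (stepC b p I) q w"

definition finalC :: "nat set \<Rightarrow> nat set \<Rightarrow> nat \<times> nat option \<Rightarrow> bool" where
  "finalC R I q \<longleftrightarrow> ((fst q \<in> R) \<noteq> (snd q \<in> Some ` I))"

definition stateC :: "nat \<Rightarrow> nat \<Rightarrow> nat set \<Rightarrow> nat \<times> nat option \<Rightarrow> bool" where
  "stateC b p I q \<longleftrightarrow> (\<exists>w \<in> lists {0..<b}. runC b p I (0, Some 0) w = q)"

definition nerode_equiv :: "nat \<Rightarrow> nat \<Rightarrow> nat set \<Rightarrow> nat set \<Rightarrow>
    nat \<times> nat option \<Rightarrow> nat \<times> nat option \<Rightarrow> bool" where
  "nerode_equiv b p R I q q' \<longleftrightarrow>
     (\<forall>u \<in> lists {0..<b}. finalC R I (runC b p I q u) = finalC R I (runC b p I q' u))"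

definition coprime_part :: "nat \<Rightarrow> nat \<Rightarrow> nat" where
  "coprime_part p b = (GREATEST k. k dvd p \<and> coprime k b)"

end

theory Submission
  imports Defs "HOL-Number_Theory.Cong"
begin

text \<open>
  Reading a long enough word u from the states (s, t) and (s', t') leaves the B_I-component
  non-final, so the two states accept u exactly when s b^|u| + val u and s' b^|u| + val u
  lie in R + pN. Since every residue occurs as val u, R + pN is invariant under translation
  by (s - s') b^n, hence by gcd((s - s') b^n, p); properness forces this gcd to be p.
  Since k divides p and b^n is coprime with k, cancelling b^n gives s = s' (mod k).
\<close>

definition nat_of_digits :: "nat \<Rightarrow> nat list \<Rightarrow> nat" where
  "nat_of_digits b u = foldl (\<lambda>x a. x * b + a) 0 u"

lemma nat_of_digits_snoc: "nat_of_digits b (u @ [a]) = nat_of_digits b u * b + a"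
  by (simp add: nat_of_digits_def)

fun digits_of :: "nat \<Rightarrow> nat \<Rightarrow> nat \<Rightarrow> nat list" where
  "digits_of b 0 v = []"
| "digits_of b (Suc n) v = digits_of b n (v div b) @ [v mod b]"

lemma length_digits_of: "length (digits_of b n v) = n"
  by (induction n arbitrary: v) auto

lemma digits_of_in_lists: "0 < b \<Longrightarrow> digits_of b n v \<in> lists {0..<b}"
  by (induction n arbitrary: v) auto

lemma nat_of_digits_of: "nat_of_digits b (digits_of b n v) = v mod b ^ n"
proof (induction n arbitrary: v)
  case 0
  then show ?case by (simp add: nat_of_digits_def)
next
  case (Suc n)
  have "nat_of_digits b (digits_of b (Suc n) v) = v div b mod b ^ n * b + v mod b"
    by (simp add: nat_of_digits_snoc Suc.IH)
  also have "\<dots> = v mod b ^ Suc n"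
    using mod_mult2_eq[of v b "b ^ n"] by (simp add: mult.commute)
  finally show ?case .
qed

lemma runC_snoc: "runC b p I q (u @ [a]) = stepC b p I (runC b p I q u) a"
  by (simp add: runC_def)

lemma fst_runC:
  assumes "u \<noteq> []"
  shows "fst (runC b p I q u) = (fst q * b ^ length u + nat_of_digits b u) mod p"
  using assms
proof (induction u rule: rev_induct)
  case Nil
  then show ?case by simp
next
  case (snoc a u)
  show ?case
  proof (cases "u = []")
    case True
    then show ?thesis by (simp add: runC_def stepC_def stepA_def nat_of_digits_def)
  next
    case False
    have "fst (runC b p I q (u @ [a])) = (fst (runC b p I q u) * b + a) mod p"
      by (simp add: runC_snoc stepC_def stepA_def)
    also have "\<dots> = ((fst q * b ^ length u + nat_of_digits b u) * b + a) mod p"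
      using snoc.IH[OF False] by (metis mod_add_left_eq mod_mult_left_eq)
    also have "\<dots> = (fst q * b ^ length (u @ [a]) + nat_of_digits b (u @ [a])) mod p"
      by (simp add: nat_of_digits_snoc algebra_simps)
    finally show ?thesis .
  qed
qed

lemma snd_runC_Some_ge: "snd (runC b p I q u) = Some j \<Longrightarrow> nat_of_digits b u \<le> j"
proof (induction u arbitrary: j rule: rev_induct)
  case Nil
  then show ?case by (simp add: nat_of_digits_def)
next
  case (snoc a u)
  obtain i where i: "snd (runC b p I q u) = Some i"
    using snoc.prems by (cases "snd (runC b p I q u)") (auto simp: runC_snoc stepC_def)
  then have "j = i * b + a"
    using snoc.prems by (auto simp: runC_snoc stepC_def split: if_splits)
  moreover have "nat_of_digits b u \<le> i"
    using snoc.IH i by blast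
  ultimately show ?case by (simp add: nat_of_digits_snoc add_mono mult_right_mono)
qed

lemma finalC_runC_large:
  assumes "u \<noteq> []" and "\<forall>j \<in> I. j < nat_of_digits b u"
  shows "finalC R I (runC b p I q u) \<longleftrightarrow>
         (fst q * b ^ length u + nat_of_digits b u) mod p \<in> R"
proof -
  have "snd (runC b p I q u) \<notin> Some ` I"
    using snd_runC_Some_ge assms(2) by (fastforce simp: not_le[symmetric])
  then show ?thesis by (simp add: finalC_def fst_runC[OF assms(1)])
qed

lemma nerode_equiv_shift_invariant:
  assumes "1 < b" and "0 < p" and "finite I"
    and "nerode_equiv b p R I (s, t) (s', t')"
  obtains n where "\<And>x. (s * b ^ n + x) mod p \<in> R \<longleftrightarrow> (s' * b ^ n + x) mod p \<in> R"
proof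
  define M where "M = Suc (Max I)"
  define n where "n = p * Suc M"
  fix x
  \<comment> \<open>a representative of x mod p that exceeds every element of I and has n digits\<close>
  define v where "v = x mod p + p * M"
  have "v < n"
    using assms(2) by (simp add: v_def n_def)
  also have "n < 2 ^ n"
    by simp
  also have "(2::nat) ^ n \<le> b ^ n"
    using assms(1) by (simp add: power_mono)
  finally have v_less: "v < b ^ n" .
  let ?u = "digits_of b n v"
  have val_u: "nat_of_digits b ?u = v"
    using v_less by (simp add: nat_of_digits_of)
  have "?u \<noteq> []"
    using assms(2) length_digits_of[of b n v] by (auto simp: n_def)
  moreover have "\<forall>j \<in> I. j < nat_of_digits b ?u"
  proof
    fix j assume "j \<in> I"
    then have "j < M"
      using assms(3) by (simp add: M_def le_imp_less_Suc)
    also have "M \<le> v"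
      using assms(2) by (simp add: v_def trans_le_add2)
    finally show "j < nat_of_digits b ?u"
      by (simp add: val_u)
  qed
  moreover have "finalC R I (runC b p I (s, t) ?u) = finalC R I (runC b p I (s', t') ?u)"
    using assms(4) digits_of_in_lists assms(1) unfolding nerode_equiv_def by simp
  ultimately have "(s * b ^ n + v) mod p \<in> R \<longleftrightarrow> (s' * b ^ n + v) mod p \<in> R"
    by (simp add: finalC_runC_large length_digits_of val_u)
  moreover have "(c + v) mod p = (c + x) mod p" for c
    by (metis v_def add.assoc mod_add_right_eq mod_mult_self2)
  ultimately show "(s * b ^ n + x) mod p \<in> R \<longleftrightarrow> (s' * b ^ n + x) mod p \<in> R"
    by simp
qed

lemma periodic_int_mult:
  fixes Q :: "int \<Rightarrow> bool"
  assumes "\<And>y. Q (y + t) = Q y"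
  shows "Q (y + c * t) = Q y"
proof -
  have pos: "Q (z + int n * t) = Q z" for z n
  proof (induction n arbitrary: z)
    case 0
    then show ?case by simp
  next
    case (Suc n)
    have "Q (z + int (Suc n) * t) = Q ((z + t) + int n * t)"
      by (simp add: algebra_simps)
    then show ?case using Suc assms by simp
  qed
  show ?thesis
  proof (cases "0 \<le> c")
    case True
    then show ?thesis using pos[of y "nat c"] by simp
  next
    case False
    then show ?thesis using pos[of "y + c * t" "nat (- c)"] by (simp add: algebra_simps)
  qed
qed

lemma periodic_int_gcd:
  fixes Q :: "int \<Rightarrow> bool"
  assumes "\<And>y. Q (y + d) = Q y" and "\<And>y. Q (y + e) = Q y"
  shows "Q (y + gcd d e) = Q y"
proof -
  obtain u v where "u * d + v * e = gcd d e"
    using bezout_int by blast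
  then have "Q (y + gcd d e) = Q ((y + u * d) + v * e)"
    by (simp add: add.assoc)
  also have "\<dots> = Q y"
    using periodic_int_mult[of Q, OF assms(2)] periodic_int_mult[of Q, OF assms(1)] by simp
  finally show ?thesis .
qed

lemma periodic_set_mod_iff:
  assumes "R \<subseteq> {0..<p}"
  shows "x \<in> periodic_set p R \<longleftrightarrow> x mod p \<in> R"
proof
  assume "x \<in> periodic_set p R"
  then show "x mod p \<in> R"
    using assms by (auto simp: periodic_set_def)
next
  assume "x mod p \<in> R"
  then show "x \<in> periodic_set p R"
    unfolding periodic_set_def by (intro CollectI exI[of _ "x mod p"] exI[of _ "x div p"]) simp
qed

lemma proper_minimal_period:
  assumes "proper p R I" and "0 < q"
    and period: "\<And>x. (x + q) mod p \<in> R \<longleftrightarrow> x mod p \<in> R"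
  shows "p \<le> q"
proof (rule ccontr)
  assume "\<not> p \<le> q"
  then have "q < p" by simp
  define R' where "R' = {r \<in> R. r < q}"
  have R'_sub: "R' \<subseteq> {0..<q}"
    by (auto simp: R'_def)
  have multiples: "(x + q * j) mod p \<in> R \<longleftrightarrow> x mod p \<in> R" for x j
  proof (induction j)
    case (Suc j)
    then show ?case using period[of "x + q * j"] by (simp add: algebra_simps)
  qed simp
  have "x mod p \<in> R \<longleftrightarrow> x mod q \<in> R'" for x
  proof -
    have "x mod p \<in> R \<longleftrightarrow> (x mod q) mod p \<in> R"
      using multiples[of "x mod q" "x div q"] by simp
    moreover have "(x mod q) mod p = x mod q"
      using \<open>0 < q\<close> \<open>q < p\<close> by (meson less_trans mod_less mod_less_divisor)
    ultimately show ?thesis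
      using \<open>0 < q\<close> by (simp add: R'_def)
  qed
  then have "periodic_set p R = periodic_set q R'"
    using periodic_set_mod_iff[of R p] periodic_set_mod_iff[OF R'_sub] assms(1)
    by (auto simp: proper_def)
  then have "S_set p R I = S_set q R' I"
    by (simp add: S_set_def)
  moreover have "\<not> (\<exists>R' I'. R' \<subseteq> {0..<q} \<and> finite I' \<and> S_set p R I = S_set q R' I')"
    using assms(1) \<open>0 < q\<close> \<open>q < p\<close> unfolding proper_def by blast
  ultimately show False
    using assms(1) R'_sub by (auto simp: proper_def)
qed

lemma proper_shift_invariant_cong:
  assumes "proper p R I"
    and shift: "\<And>x. (A + x) mod p \<in> R \<longleftrightarrow> (B + x) mod p \<in> R"
  shows "[A = B] (mod p)"
proof -
  have "0 < p"
    using assms(1) by (simp add: proper_def)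
  define Q where "Q y \<longleftrightarrow> nat (y mod int p) \<in> R" for y
  have Q_nat: "Q (int x) \<longleftrightarrow> x mod p \<in> R" for x
    by (simp add: Q_def flip: of_nat_mod)
  have Q_mod: "Q y = Q z" if "y mod int p = z mod int p" for y z
    using that by (simp add: Q_def)
  have period_p: "Q (y + int p) = Q y" for y
    by (simp add: Q_def)
  have period_diff: "Q (y + (int A - int B)) = Q y" for y
  proof -
    define x where "x = nat ((y - int B) mod int p)"
    have int_x: "int x = (y - int B) mod int p"
      using \<open>0 < p\<close> by (simp add: x_def)
    have "Q (y + (int A - int B)) = Q (int (A + x))"
      by (rule Q_mod) (simp add: int_x mod_add_right_eq algebra_simps)
    also have "\<dots> = Q (int (B + x))"
      by (simp only: Q_nat shift)
    also have "\<dots> = Q y"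
      by (rule Q_mod) (simp add: int_x mod_add_right_eq algebra_simps)
    finally show ?thesis .
  qed
  define g where "g = gcd (int A - int B) (int p)"
  have "0 < g"
    using \<open>0 < p\<close> by (simp add: g_def)
  have "p \<le> nat g"
  proof (rule proper_minimal_period[OF assms(1)])
    show "0 < nat g"
      using \<open>0 < g\<close> by simp
    show "(x + nat g) mod p \<in> R \<longleftrightarrow> x mod p \<in> R" for x
      using periodic_int_gcd[of Q, OF period_diff period_p, of "int x"] \<open>0 < g\<close>
      by (simp add: g_def flip: Q_nat)
  qed
  moreover have "g dvd int p"
    by (simp add: g_def)
  ultimately have "g = int p"
    using \<open>0 < p\<close> \<open>0 < g\<close> zdvd_imp_le by fastforce
  then have "int p dvd int A - int B"
    by (metis g_def gcd_dvd1)
  then show ?thesis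
    by (simp add: cong_iff_dvd_diff flip: cong_int_iff)
qed

lemma coprime_part_dvd_coprime:
  assumes "0 < p"
  shows "coprime_part p b dvd p" and "coprime (coprime_part p b) b"
proof -
  have "coprime_part p b dvd p \<and> coprime (coprime_part p b) b"
    unfolding coprime_part_def
    by (rule GreatestI_nat[where k = 1 and b = p]) (use assms in \<open>auto intro: dvd_imp_le\<close>)
  then show "coprime_part p b dvd p" and "coprime (coprime_part p b) b"
    by auto
qed

theorem proposition40:
  fixes b p :: nat and R I :: "nat set" and s s' :: nat and t t' :: "nat option"
  assumes "b > 1"
    and "proper p R I"
    and "I \<noteq> {}"
    and "stateC b p I (s, t)"
    and "stateC b p I (s', t')"
    and "nerode_equiv b p R I (s, t) (s', t')"
  shows "s mod coprime_part p b = s' mod coprime_part p b"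
proof -
  have "0 < p" and "finite I"
    using assms(2) by (auto simp: proper_def)
  obtain n where "\<And>x. (s * b ^ n + x) mod p \<in> R \<longleftrightarrow> (s' * b ^ n + x) mod p \<in> R"
    using nerode_equiv_shift_invariant[OF assms(1) \<open>0 < p\<close> \<open>finite I\<close> assms(6)] by blast
  then have "[s * b ^ n = s' * b ^ n] (mod p)"
    by (rule proper_shift_invariant_cong[OF assms(2)])
  then have "[s * b ^ n = s' * b ^ n] (mod coprime_part p b)"
    using coprime_part_dvd_coprime(1)[OF \<open>0 < p\<close>] by (rule cong_dvd_modulus_nat)
  moreover have "coprime (b ^ n) (coprime_part p b)"
    using coprime_part_dvd_coprime(2)[OF \<open>0 < p\<close>] by (simp add: coprime_commute)
  ultimately have "[s = s'] (mod coprime_part p b)"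
    using cong_mult_rcancel_nat by blast
  then show ?thesis
    unfolding cong_def .
qed

end
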